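(* Let $F$ be a field of characteristic zero, $H$ an abelian group, and $A=\bigoplus_{h\in H}A_h$ an associative $H$-graded algebra whose $H$-grading is regular, with the function $\theta:H\times H\to F^*$ from the definition of regularity. Then $\theta$ is a skew-symmetric bicharacter and $A$ is $\theta$-commutative, i.e., $A$ is an $H$-graded color commutative superalgebra.
   Context: $H$ is written additively. An $H$-grading on $A$ is regular if (1) for every $n$ and every $(h_1,\dots,h_n)\in H^n$ there exist $a_i\in A_{h_i}$ with $a_1\cdots a_n\neq0$, and (2) for all $g,h\in H$ there exists $\theta(g,h)\in F^*$ such that $ab=\theta(g,h)ba$ for all $a\in A_g$, $b\in A_h$. A skew-symmetric bicharacter is a map $\beta:H\times H\to F^*$ with $\beta(g+h,k)=\beta(g,k)\beta(h,k)$, $\beta(g,h+k)=\beta(g,h)\beta(g,k)$, $\beta(g,h)=\beta(h,g)^{-1}$; $A$ is $\beta$-commutative (a color commutative superalgebra) if $ab=\beta(g,h)ba$ for all $a\in A_g$, $b\in A_h$. *)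

theory Defs
  imports Main "HOL.Modules"
begin

fun nprod :: "'a::semigroup_mult list \<Rightarrow> 'a" where
  "nprod [] = undefined"
| "nprod [a] = a"
| "nprod (a # b # as) = a * nprod (b # as)"

definition assoc_algebra :: "('k::field \<Rightarrow> 'a::ring \<Rightarrow> 'a) \<Rightarrow> bool" where
  "assoc_algebra scale \<longleftrightarrow> module scale \<and>
     (\<forall>c a b. scale c (a * b) = scale c a * b \<and> scale c (a * b) = a * scale c b)"

definition graded_algebra :: "('k::field \<Rightarrow> 'a::ring \<Rightarrow> 'a) \<Rightarrow> ('h::ab_group_add \<Rightarrow> 'a set) \<Rightarrow> bool" where
  "graded_algebra scale A \<longleftrightarrow> assoc_algebra scale \<and>
     (\<forall>h. module.subspace scale (A h)) \<and>
     (\<forall>x. \<exists>!f. finite {h. f h \<noteq> 0} \<and> (\<forall>h. f h \<in> A h) \<and> x = sum f {h. f h \<noteq> 0}) \<and>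
     (\<forall>g h a b. a \<in> A g \<longrightarrow> b \<in> A h \<longrightarrow> a * b \<in> A (g + h))"

definition regular_grading :: "('k::field \<Rightarrow> 'a::ring \<Rightarrow> 'a) \<Rightarrow> ('h::ab_group_add \<Rightarrow> 'a set) \<Rightarrow> ('h \<Rightarrow> 'h \<Rightarrow> 'k) \<Rightarrow> bool" where
  "regular_grading scale A \<theta> \<longleftrightarrow>
     (\<forall>hs. hs \<noteq> [] \<longrightarrow> (\<exists>as. length as = length hs \<and> (\<forall>i<length hs. as ! i \<in> A (hs ! i)) \<and> nprod as \<noteq> 0)) \<and>
     (\<forall>g h. \<theta> g h \<noteq> 0 \<and> (\<forall>a b. a \<in> A g \<longrightarrow> b \<in> A h \<longrightarrow> a * b = scale (\<theta> g h) (b * a)))"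

definition skew_symmetric_bicharacter :: "('h::ab_group_add \<Rightarrow> 'h \<Rightarrow> 'k::field) \<Rightarrow> bool" where
  "skew_symmetric_bicharacter \<beta> \<longleftrightarrow>
     (\<forall>g h. \<beta> g h \<noteq> 0) \<and>
     (\<forall>g h k. \<beta> (g + h) k = \<beta> g k * \<beta> h k) \<and>
     (\<forall>g h k. \<beta> g (h + k) = \<beta> g h * \<beta> g k) \<and>
     (\<forall>g h. \<beta> g h = inverse (\<beta> h g))"

definition color_commutative :: "('k::field \<Rightarrow> 'a::ring \<Rightarrow> 'a) \<Rightarrow> ('h::ab_group_add \<Rightarrow> 'a set) \<Rightarrow> ('h \<Rightarrow> 'h \<Rightarrow> 'k) \<Rightarrow> bool" where
  "color_commutative scale A \<beta> \<longleftrightarrow>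
     (\<forall>g h a b. a \<in> A g \<longrightarrow> b \<in> A h \<longrightarrow> a * b = scale (\<beta> g h) (b * a))"

end

theory Submission
  imports Defs "HOL.Vector_Spaces"
begin

text \<open>Regularity provides homogeneous elements of any degrees whose product is nonzero.
  Cancelling such a product from the two sides of a commutation relation turns
  associativity into multiplicativity of \<open>\<theta>\<close>: from \<open>a b = \<theta>(g,h) b a\<close> applied twice one gets
  \<open>\<theta>(g,h) \<theta>(h,g) = 1\<close>, and moving \<open>c\<close> past \<open>a b\<close> either at once or one factor at a time
  gives \<open>\<theta>(g+h,k) = \<theta>(g,k) \<theta>(h,k)\<close>; additivity in the second argument follows from skew-symmetry.\<close>

lemma skew_symmetric_bicharacterI:
  fixes \<beta> :: "'h::ab_group_add \<Rightarrow> 'h \<Rightarrow> 'k::field"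
  assumes inverse: "\<And>g h. \<beta> g h * \<beta> h g = 1"
    and add_left: "\<And>g h k. \<beta> (g + h) k = \<beta> g k * \<beta> h k"
  shows "skew_symmetric_bicharacter \<beta>"
proof -
  have nonzero: "\<beta> g h \<noteq> 0" for g h
    using inverse[of g h] by auto
  have skew: "\<beta> g h = inverse (\<beta> h g)" for g h
    using inverse[of g h] nonzero[of h g] by (simp add: field_simps)
  have "\<beta> g (h + k) = \<beta> g h * \<beta> g k" for g h k
    using skew[of g "h + k"] add_left[of h k g] skew[of g h] skew[of g k]
    by simp
  then show ?thesis
    unfolding skew_symmetric_bicharacter_def using nonzero add_left skew by blast
qed

lemma assoc_algebra_vector_space:
  assumes "assoc_algebra scale"
  shows "vector_space scale"
proof -
  have "module scale"
    using assms unfolding assoc_algebra_def by (elim conjE)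
  then show ?thesis
    unfolding module_def vector_space_def by blast
qed

lemma regular_grading_nonzero_product2:
  assumes "regular_grading scale A \<theta>"
  obtains a b where "a \<in> A g" "b \<in> A h" "a * b \<noteq> 0"
proof -
  obtain as where as: "length as = length [g, h]" "\<forall>i<length [g, h]. as ! i \<in> A ([g, h] ! i)" "nprod as \<noteq> 0"
    using assms unfolding regular_grading_def by (elim conjE) blast
  then obtain a b where ab: "as = [a, b]"
    by (cases as; cases "tl as") auto
  show thesis
  proof
    show "a \<in> A g" using as(2)[rule_format, of 0] ab by simp
    show "b \<in> A h" using as(2)[rule_format, of 1] ab by simp
    show "a * b \<noteq> 0" using as(3) ab by simp
  qed
qed

lemma regular_grading_nonzero_product3:
  assumes "regular_grading scale A \<theta>"
  obtains a b c where "a \<in> A g" "b \<in> A h" "c \<in> A k" "a * (b * c) \<noteq> 0"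
proof -
  obtain as where as: "length as = length [g, h, k]" "\<forall>i<length [g, h, k]. as ! i \<in> A ([g, h, k] ! i)" "nprod as \<noteq> 0"
    using assms unfolding regular_grading_def by (elim conjE) blast
  then obtain a b c where abc: "as = [a, b, c]"
    by (cases as; cases "tl as"; cases "tl (tl as)") auto
  show thesis
  proof
    show "a \<in> A g" using as(2)[rule_format, of 0] abc by simp
    show "b \<in> A h" using as(2)[rule_format, of 1] abc by simp
    show "c \<in> A k" using as(2)[rule_format, of 2] abc by simp
    show "a * (b * c) \<noteq> 0" using as(3) abc by simp
  qed
qed

locale commutation_relation =
  fixes scale :: "'k::field \<Rightarrow> 'a::ring \<Rightarrow> 'a"
    and A :: "'h::ab_group_add \<Rightarrow> 'a set"
    and \<theta> :: "'h \<Rightarrow> 'h \<Rightarrow> 'k"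
  assumes assoc_algebra: "assoc_algebra scale"
    and mult_closed: "a \<in> A g \<Longrightarrow> b \<in> A h \<Longrightarrow> a * b \<in> A (g + h)"
    and commute: "a \<in> A g \<Longrightarrow> b \<in> A h \<Longrightarrow> a * b = scale (\<theta> g h) (b * a)"
begin

interpretation vector_space scale
  using assoc_algebra by (rule assoc_algebra_vector_space)

lemma scale_mult_left: "scale c (a * b) = scale c a * b"
  and scale_mult_right: "scale c (a * b) = a * scale c b"
  using assoc_algebra unfolding assoc_algebra_def by blast+

lemma factor_mult_swap_eq_1:
  assumes a: "a \<in> A g" and b: "b \<in> A h" and nonzero: "a * b \<noteq> 0"
  shows "\<theta> g h * \<theta> h g = 1"
proof -
  have "scale 1 (a * b) = scale (\<theta> g h) (b * a)"
    using commute[OF a b] by simp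
  also have "\<dots> = scale (\<theta> g h) (scale (\<theta> h g) (a * b))"
    by (subst commute[OF b a]) (rule refl)
  also have "\<dots> = scale (\<theta> g h * \<theta> h g) (a * b)"
    by (rule scale_scale)
  finally have "scale 1 (a * b) = scale (\<theta> g h * \<theta> h g) (a * b)" .
  with nonzero show ?thesis
    by (simp only: scale_cancel_right) simp
qed

lemma factor_add_left:
  assumes a: "a \<in> A g" and b: "b \<in> A h" and c: "c \<in> A k" and nonzero: "a * (b * c) \<noteq> 0"
  shows "\<theta> (g + h) k = \<theta> g k * \<theta> h k"
proof -
  have at_once: "a * (b * c) = scale (\<theta> (g + h) k) (c * (a * b))"
    using commute[OF mult_closed[OF a b] c] by (simp only: mult.assoc)
  have "a * (b * c) = a * scale (\<theta> h k) (c * b)"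
    by (subst commute[OF b c]) (rule refl)
  also have "\<dots> = scale (\<theta> h k) ((a * c) * b)"
    by (simp only: scale_mult_right[symmetric] mult.assoc)
  also have "\<dots> = scale (\<theta> h k) (scale (\<theta> g k) (c * a) * b)"
    by (subst commute[OF a c]) (rule refl)
  also have "\<dots> = scale (\<theta> g k * \<theta> h k) (c * (a * b))"
    by (simp only: scale_mult_left[symmetric] mult.assoc scale_scale mult.commute)
  finally have stepwise: "a * (b * c) = scale (\<theta> g k * \<theta> h k) (c * (a * b))" .
  have "c * (a * b) \<noteq> 0"
    using nonzero unfolding at_once by auto
  moreover have "scale (\<theta> (g + h) k) (c * (a * b)) = scale (\<theta> g k * \<theta> h k) (c * (a * b))"
    using at_once stepwise by (rule trans[OF sym])
  ultimately show ?thesis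
    unfolding scale_cancel_right by blast
qed

end

theorem mainTheorem11:
  fixes scale :: "'k::field_char_0 \<Rightarrow> 'a::ring \<Rightarrow> 'a"
    and A :: "'h::ab_group_add \<Rightarrow> 'a set"
    and \<theta> :: "'h \<Rightarrow> 'h \<Rightarrow> 'k"
  assumes "graded_algebra scale A"
    and "regular_grading scale A \<theta>"
  shows "skew_symmetric_bicharacter \<theta> \<and> color_commutative scale A \<theta>"
proof -
  interpret commutation_relation scale A \<theta>
  proof
    show "assoc_algebra scale"
      using assms(1) unfolding graded_algebra_def by (elim conjE)
    show "a * b \<in> A (g + h)" if "a \<in> A g" "b \<in> A h" for a b g h
      using assms(1) that unfolding graded_algebra_def by (elim conjE) blast
    show "a * b = scale (\<theta> g h) (b * a)" if "a \<in> A g" "b \<in> A h" for a b g h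
      using assms(2) that unfolding regular_grading_def by (elim conjE) blast
  qed
  have "\<theta> g h * \<theta> h g = 1" for g h
    by (rule regular_grading_nonzero_product2[OF assms(2)]) (rule factor_mult_swap_eq_1)
  moreover have "\<theta> (g + h) k = \<theta> g k * \<theta> h k" for g h k
    by (rule regular_grading_nonzero_product3[OF assms(2)]) (rule factor_add_left)
  ultimately show ?thesis
    unfolding color_commutative_def using skew_symmetric_bicharacterI commute by blast
qed

end
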